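(* For every set $\mathcal{E}\subseteq\Lambda_s$ of simple terms, the following are equivalent: (1) $\mathcal{E}$ is a maximal clique (with respect to the coherence relation $\frown$) having finite height; (2) there exists a $\lambda$-term $M\in\Lambda$ such that $\mathcal{E}=\mathcal{T}(M)$.
   Context: Call-by-value resource calculus. Resource values $u,v::=x\mid \lambda x.t$; simple terms $s,t::= st\mid [v_1,\dots,v_k]$ ($k\ge0$, bags are finite multisets); resource terms $e::=v\mid s$. $\Lambda_s$ is the set of simple terms, $\Lambda_r$ the set of resource terms. Height: $\mathrm{ht}(x)=0$, $\mathrm{ht}(\lambda x.t)=\mathrm{ht}(t)+1$, $\mathrm{ht}(st)=\max\{\mathrm{ht}(s),\mathrm{ht}(t)\}+1$, $\mathrm{ht}([v_1,\dots,v_k])=\max\{\mathrm{ht}(v_i)\}+1$. The height of a non-empty set of resource terms is the maximal height of its elements if it exists (the set then has finite height), and $\aleph_0$ otherwise. The coherence relation $\frown\subseteq\Lambda_r\times\Lambda_r$ is the smallest relation such that: $x\frown x$; $\lambda x.s\frown\lambda x.t$ whenever $s\frown t$; $[v_1,\dots,v_k]\frown[v_{k+1},\dots,v_n]$ whenever $v_i\frown v_j$ for all $i,j\le n$; $s_1t_1\frown s_2t_2$ whenever $s_1\frown s_2$ and $t_1\frown t_2$. A set $\mathcal{E}\subseteq\Lambda_r$ is a clique if $e\frown e'$ for all $e,e'\in\mathcal{E}$, and a clique is maximal if for every $e\in\Lambda_r$, $\mathcal{E}\cup\{e\}$ being a clique entails $e\in\mathcal{E}$. The (call-by-value) Taylor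 expansion $\mathcal{T}(M)\subseteq\Lambda_s$ of a $\lambda$-term is defined by $\mathcal{T}(x)=\{[x^n]\mid n\ge0\}$ (where $[x^n]$ is the bag with $n$ copies of $x$), $\mathcal{T}(\lambda x.N)=\{[\lambda x.t_1,\dots,\lambda x.t_n]\mid n\ge0,\ t_i\in\mathcal{T}(N)\}$, $\mathcal{T}(PQ)=\{st\mid s\in\mathcal{T}(P),t\in\mathcal{T}(Q)\}$. *)

theory Defs
  imports "HOL-Library.Multiset"
begin

text \<open>Variables are represented by de Bruijn indices, so that syntax is taken
 up to alpha-equivalence, as in the paper.\<close>

datatype lterm = Var nat | Lam lterm | App lterm lterm

datatype rval = RVar nat | RLam rsimp
     and rsimp = RApp rsimp rsimp | RBag "rval multiset"

datatype rterm = V rval | S rsimp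

primrec ht_v :: "rval \<Rightarrow> nat" and ht_s :: "rsimp \<Rightarrow> nat" where
  "ht_v (RVar x) = 0"
| "ht_v (RLam t) = Suc (ht_s t)"
| "ht_s (RApp s t) = Suc (max (ht_s s) (ht_s t))"
| "ht_s (RBag A) = Suc (Max (insert 0 (set_mset (image_mset ht_v A))))"

fun ht :: "rterm \<Rightarrow> nat" where
  "ht (V v) = ht_v v"
| "ht (S s) = ht_s s"

inductive coh :: "rterm \<Rightarrow> rterm \<Rightarrow> bool" where
  coh_var: "coh (V (RVar x)) (V (RVar x))"
| coh_lam: "coh (S s) (S t) \<Longrightarrow> coh (V (RLam s)) (V (RLam t))"
| coh_bag: "(\<forall>u \<in> set_mset (A + B). \<forall>w \<in> set_mset (A + B). coh (V u) (V w))
            \<Longrightarrow> coh (S (RBag A)) (S (RBag B))"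
| coh_app: "coh (S s1) (S s2) \<Longrightarrow> coh (S t1) (S t2)
            \<Longrightarrow> coh (S (RApp s1 t1)) (S (RApp s2 t2))"

definition clique :: "rterm set \<Rightarrow> bool" where
  "clique C \<longleftrightarrow> (\<forall>e \<in> C. \<forall>e' \<in> C. coh e e')"

definition maximal_clique :: "rterm set \<Rightarrow> bool" where
  "maximal_clique C \<longleftrightarrow> clique C \<and> (\<forall>e. clique (insert e C) \<longrightarrow> e \<in> C)"

definition finite_height :: "rterm set \<Rightarrow> bool" where
  "finite_height C \<longleftrightarrow> C \<noteq> {} \<and> (\<exists>n. \<forall>e \<in> C. ht e \<le> n)"

fun taylor :: "lterm \<Rightarrow> rsimp set" where
  "taylor (Var x) = {RBag (replicate_mset n (RVar x)) | n. True}"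
| "taylor (Lam N) = {RBag A | A. \<forall>v \<in># A. \<exists>t \<in> taylor N. v = RLam t}"
| "taylor (App P Q) = {RApp s t | s t. s \<in> taylor P \<and> t \<in> taylor Q}"

end

theory Submission
  imports Defs
begin

text \<open>Write \<open>bags_over U\<close> for the bags with support in \<open>U\<close> and \<open>apps E F\<close> for the
  applications \<open>s t\<close> with \<open>s \<in> E\<close>, \<open>t \<in> F\<close>. The Taylor expansion is built by these two
  operations: \<open>T(x) = bags_over {x}\<close>, \<open>T(\<lambda>x.N) = bags_over (\<lambda>x.T(N))\<close> and
  \<open>T(PQ) = apps T(P) T(Q)\<close>, and both operations preserve and reflect maximality of cliques.
  Conversely, coherent terms have the same outermost constructor, so a maximal clique is either
  \<open>apps\<close> of two maximal cliques, or \<open>bags_over\<close> a maximal clique of values, which in turn is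
  a single variable or the abstractions of a maximal clique. Each decomposition lowers the height,
  so induction on a height bound recovers a \<open>\<lambda>\<close>-term.\<close>

lemma coh_sym: "coh e e' \<Longrightarrow> coh e' e"
  by (induction rule: coh.induct) (auto intro: coh.intros simp: ac_simps)

inductive_cases coh_RVarE: "coh (V (RVar x)) e"
inductive_cases coh_RLamE: "coh (V (RLam s)) e"
inductive_cases coh_RAppE: "coh (S (RApp s t)) e"
inductive_cases coh_RBagE: "coh (S (RBag A)) e"

lemma clique_insert: "clique (insert e C) \<longleftrightarrow> coh e e \<and> (\<forall>c\<in>C. coh e c) \<and> clique C"
  unfolding clique_def by (auto intro: coh_sym)

lemma coh_RVar_iff [simp]: "coh (V (RVar x)) e \<longleftrightarrow> e = V (RVar x)"
  by (auto elim: coh_RVarE intro: coh.coh_var)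

lemma coh_RLam_iff [simp]: "coh (V (RLam s)) e \<longleftrightarrow> (\<exists>t. e = V (RLam t) \<and> coh (S s) (S t))"
  by (auto elim: coh_RLamE intro: coh.coh_lam)

lemma coh_RApp_iff [simp]:
  "coh (S (RApp s t)) e \<longleftrightarrow> (\<exists>s' t'. e = S (RApp s' t') \<and> coh (S s) (S s') \<and> coh (S t) (S t'))"
  by (auto elim: coh_RAppE intro: coh.coh_app)

lemma coh_RBag_iff [simp]:
  "coh (S (RBag A)) e \<longleftrightarrow>
     (\<exists>B. e = S (RBag B) \<and> (\<forall>u \<in># A + B. \<forall>w \<in># A + B. coh (V u) (V w)))"
  by (auto elim: coh_RBagE intro: coh.coh_bag)

lemma not_coh_V_S [simp]: "\<not> coh (V v) (S s)"
  by (cases v) auto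

lemma not_coh_S_V [simp]: "\<not> coh (S s) (V v)"
  using not_coh_V_S coh_sym by blast

lemma clique_image: "clique (f ` A) \<longleftrightarrow> (\<forall>a\<in>A. \<forall>b\<in>A. coh (f a) (f b))"
  unfolding clique_def by blast

lemma maximal_clique_nonempty: "maximal_clique C \<Longrightarrow> C \<noteq> {}"
  unfolding maximal_clique_def by (metis clique_insert coh_RVar_iff empty_iff)

text \<open>Values never cohere with simple terms, and the empty bag is coherent with itself; hence
  maximality of a clique of simple terms need only be tested against simple terms, and it
  already forces the clique to be non-empty.\<close>

lemma maximal_clique_image_S:
  "maximal_clique (S ` E) \<longleftrightarrow>
     clique (S ` E) \<and> (\<forall>s. coh (S s) (S s) \<longrightarrow> (\<forall>t\<in>E. coh (S s) (S t)) \<longrightarrow> s \<in> E)"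
  (is "_ \<longleftrightarrow> _ \<and> ?closed")
proof
  assume "maximal_clique (S ` E)"
  then show "clique (S ` E) \<and> ?closed"
    unfolding maximal_clique_def by (auto simp: clique_insert)
next
  assume E: "clique (S ` E) \<and> ?closed"
  have "coh (S (RBag {#})) (S (RBag {#}))"
    by simp
  then have "RBag {#} \<in> E" if "E = {}"
    using E that by blast
  then obtain t0 where "t0 \<in> E" by blast
  have "e \<in> S ` E" if "clique (insert e (S ` E))" for e
  proof (cases e)
    case (V v)
    then show ?thesis using that \<open>t0 \<in> E\<close> by (auto simp: clique_insert)
  next
    case (S s)
    then show ?thesis using that E by (auto simp: clique_insert)
  qed
  then show "maximal_clique (S ` E)"
    using E unfolding maximal_clique_def by blast
qed

lemma maximal_clique_image_V:
  "maximal_clique (V ` U) \<longleftrightarrow>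
     clique (V ` U) \<and> (\<forall>v. coh (V v) (V v) \<longrightarrow> (\<forall>u\<in>U. coh (V v) (V u)) \<longrightarrow> v \<in> U)"
  (is "_ \<longleftrightarrow> _ \<and> ?closed")
proof
  assume "maximal_clique (V ` U)"
  then show "clique (V ` U) \<and> ?closed"
    unfolding maximal_clique_def by (auto simp: clique_insert)
next
  assume U: "clique (V ` U) \<and> ?closed"
  moreover have "coh (V (RVar 0)) (V (RVar 0))"
    by simp
  ultimately have "RVar 0 \<in> U" if "U = {}"
    using that by blast
  then obtain u0 where "u0 \<in> U" by blast
  have "e \<in> V ` U" if "clique (insert e (V ` U))" for e
  proof (cases e)
    case (V v)
    then show ?thesis using that U by (auto simp: clique_insert)
  next
    case (S s)
    then show ?thesis using that \<open>u0 \<in> U\<close> by (auto simp: clique_insert)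
  qed
  then show "maximal_clique (V ` U)"
    using U unfolding maximal_clique_def by blast
qed

definition apps :: "rsimp set \<Rightarrow> rsimp set \<Rightarrow> rsimp set" where
  "apps E F = {RApp s t | s t. s \<in> E \<and> t \<in> F}"

definition bags_over :: "rval set \<Rightarrow> rsimp set" where
  "bags_over U = {RBag A | A. set_mset A \<subseteq> U}"

lemma clique_apps: "clique (S ` E) \<Longrightarrow> clique (S ` F) \<Longrightarrow> clique (S ` apps E F)"
  unfolding clique_image apps_def by auto

lemma maximal_clique_appsD:
  assumes max: "maximal_clique (S ` apps E F)"
  shows "maximal_clique (S ` E)" and "maximal_clique (S ` F)"
proof -
  obtain s0 t0 where "s0 \<in> E" "t0 \<in> F"
    using max maximal_clique_nonempty unfolding apps_def by blast
  have coh_EF: "coh (S s) (S s') \<and> coh (S t) (S t')"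
    if "s \<in> E" "s' \<in> E" "t \<in> F" "t' \<in> F" for s s' t t'
  proof -
    have "RApp s t \<in> apps E F" "RApp s' t' \<in> apps E F"
      using that unfolding apps_def by blast+
    with max have "coh (S (RApp s t)) (S (RApp s' t'))"
      unfolding maximal_clique_def clique_def by blast
    then show ?thesis by simp
  qed
  have cl: "\<forall>s\<in>E. \<forall>s'\<in>E. coh (S s) (S s')" "\<forall>t\<in>F. \<forall>t'\<in>F. coh (S t) (S t')"
    using coh_EF \<open>s0 \<in> E\<close> \<open>t0 \<in> F\<close> by blast+
  have closed: "x \<in> apps E F" if "coh (S x) (S x)" "\<forall>y\<in>apps E F. coh (S x) (S y)" for x
    using max that unfolding maximal_clique_image_S by blast
  have "s \<in> E" if "coh (S s) (S s)" "\<forall>s'\<in>E. coh (S s) (S s')" for s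
  proof -
    have "RApp s t0 \<in> apps E F"
      by (rule closed) (use that cl \<open>t0 \<in> F\<close> in \<open>auto simp: apps_def\<close>)
    then show ?thesis by (simp add: apps_def)
  qed
  with cl show "maximal_clique (S ` E)"
    unfolding maximal_clique_image_S clique_image by blast
  have "t \<in> F" if "coh (S t) (S t)" "\<forall>t'\<in>F. coh (S t) (S t')" for t
  proof -
    have "RApp s0 t \<in> apps E F"
      by (rule closed) (use that cl \<open>s0 \<in> E\<close> in \<open>auto simp: apps_def\<close>)
    then show ?thesis by (simp add: apps_def)
  qed
  with cl show "maximal_clique (S ` F)"
    unfolding maximal_clique_image_S clique_image by blast
qed

lemma maximal_clique_appsI:
  assumes maxE: "maximal_clique (S ` E)" and maxF: "maximal_clique (S ` F)"
  shows "maximal_clique (S ` apps E F)"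
proof -
  obtain s0 t0 where "s0 \<in> E" "t0 \<in> F"
    using maxE maxF maximal_clique_nonempty by blast
  have "x \<in> apps E F" if x: "coh (S x) (S x)" "\<forall>y\<in>apps E F. coh (S x) (S y)" for x
  proof -
    have "RApp s0 t0 \<in> apps E F"
      using \<open>s0 \<in> E\<close> \<open>t0 \<in> F\<close> by (auto simp: apps_def)
    with x have "coh (S (RApp s0 t0)) (S x)"
      by (blast intro: coh_sym)
    then obtain a b where ab: "x = RApp a b" by auto
    have "a \<in> E"
    proof -
      have "\<forall>s'\<in>E. coh (S a) (S s')"
        using x(2) \<open>t0 \<in> F\<close> by (auto simp: ab apps_def)
      then show ?thesis
        using maxE x(1) unfolding maximal_clique_image_S ab by auto
    qed
    moreover have "b \<in> F"
    proof -
      have "\<forall>t'\<in>F. coh (S b) (S t')"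
        using x(2) \<open>s0 \<in> E\<close> by (auto simp: ab apps_def)
      then show ?thesis
        using maxF x(1) unfolding maximal_clique_image_S ab by auto
    qed
    ultimately show ?thesis by (auto simp: ab apps_def)
  qed
  moreover have "clique (S ` apps E F)"
    using maxE maxF clique_apps unfolding maximal_clique_def by blast
  ultimately show ?thesis
    unfolding maximal_clique_image_S by blast
qed

lemma clique_bags_over: "clique (V ` U) \<Longrightarrow> clique (S ` bags_over U)"
  unfolding clique_image bags_over_def by (auto simp: subset_iff)

lemma maximal_clique_bags_overD:
  assumes max: "maximal_clique (S ` bags_over U)"
  shows "maximal_clique (V ` U)"
proof -
  have cl: "coh (V u) (V w)" if "u \<in> U" "w \<in> U" for u w
  proof -
    have "RBag {#u#} \<in> bags_over U" "RBag {#w#} \<in> bags_over U"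
      using that unfolding bags_over_def by auto
    with max have "coh (S (RBag {#u#})) (S (RBag {#w#}))"
      unfolding maximal_clique_def clique_def by blast
    then show ?thesis by simp
  qed
  have "v \<in> U" if v: "coh (V v) (V v)" "\<forall>u\<in>U. coh (V v) (V u)" for v
  proof -
    have "\<forall>u\<in>U. coh (V u) (V v)"
      using v(2) coh_sym by blast
    then have "coh (S (RBag {#v#})) (S y)" if "y \<in> bags_over U" for y
      using that v cl unfolding bags_over_def by (auto simp: subset_iff)
    moreover have "coh (S (RBag {#v#})) (S (RBag {#v#}))"
      using v by simp
    ultimately have "RBag {#v#} \<in> bags_over U"
      using max unfolding maximal_clique_image_S by blast
    then show ?thesis by (simp add: bags_over_def)
  qed
  with cl show ?thesis
    unfolding maximal_clique_image_V clique_image by blast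
qed

lemma maximal_clique_bags_overI:
  assumes max: "maximal_clique (V ` U)"
  shows "maximal_clique (S ` bags_over U)"
proof -
  have "x \<in> bags_over U"
    if x: "coh (S x) (S x)" "\<forall>y\<in>bags_over U. coh (S x) (S y)" for x
  proof -
    have "RBag {#} \<in> bags_over U" by (simp add: bags_over_def)
    with x have "coh (S (RBag {#})) (S x)"
      by (blast intro: coh_sym)
    then obtain A where A: "x = RBag A" by auto
    have "a \<in> U" if "a \<in># A" for a
    proof -
      have "coh (V a) (V a)"
        using x(1) that by (simp add: A)
      moreover have "coh (V a) (V u)" if "u \<in> U" for u
      proof -
        have "RBag {#u#} \<in> bags_over U"
          using that by (simp add: bags_over_def)
        with x(2) have "coh (S (RBag A)) (S (RBag {#u#}))"
          unfolding A by blast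
        with \<open>a \<in># A\<close> show ?thesis by simp
      qed
      ultimately show ?thesis
        using max unfolding maximal_clique_image_V by blast
    qed
    then show ?thesis by (auto simp: A bags_over_def)
  qed
  moreover have "clique (S ` bags_over U)"
    using max clique_bags_over unfolding maximal_clique_def by blast
  ultimately show ?thesis
    unfolding maximal_clique_image_S by blast
qed

lemma maximal_clique_RVar: "maximal_clique (V ` {RVar x})"
  unfolding maximal_clique_image_V clique_image by (auto dest: coh_sym)

lemma maximal_clique_RLam_image_iff: "maximal_clique (V ` RLam ` F) \<longleftrightarrow> maximal_clique (S ` F)"
proof
  assume max: "maximal_clique (V ` RLam ` F)"
  have "s \<in> F" if "coh (S s) (S s)" "\<forall>t\<in>F. coh (S s) (S t)" for s
  proof -
    have "RLam s \<in> RLam ` F"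
      using max that unfolding maximal_clique_image_V by auto
    then show ?thesis by auto
  qed
  with max show "maximal_clique (S ` F)"
    unfolding maximal_clique_image_V maximal_clique_image_S clique_image by auto
next
  assume max: "maximal_clique (S ` F)"
  then obtain t0 where "t0 \<in> F"
    using maximal_clique_nonempty by blast
  have "v \<in> RLam ` F" if v: "coh (V v) (V v)" "\<forall>u\<in>RLam ` F. coh (V v) (V u)" for v
  proof -
    obtain s where s: "v = RLam s"
      using v(2) \<open>t0 \<in> F\<close> by (cases v) auto
    have "s \<in> F"
      using max v unfolding s maximal_clique_image_S by auto
    then show ?thesis by (simp add: s)
  qed
  with max show "maximal_clique (V ` RLam ` F)"
    unfolding maximal_clique_image_V maximal_clique_image_S clique_image by auto
qed

lemma clique_RVar_member: "clique (V ` U) \<Longrightarrow> RVar x \<in> U \<Longrightarrow> U = {RVar x}"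
  unfolding clique_image by (auto dest: coh_sym)

lemma clique_RLam_member:
  assumes "clique (V ` U)" and "RLam t \<in> U"
  shows "U = RLam ` {s. RLam s \<in> U}"
proof -
  have "coh (V (RLam t)) (V u)" if "u \<in> U" for u
    using assms that unfolding clique_image by blast
  then have "\<exists>s. u = RLam s" if "u \<in> U" for u
    using that by fastforce
  then show ?thesis by auto
qed

lemma maximal_clique_eq_clique_superset:
  "maximal_clique C \<Longrightarrow> C \<subseteq> D \<Longrightarrow> clique D \<Longrightarrow> C = D"
  unfolding maximal_clique_def clique_def by blast

lemma maximal_clique_RApp_member:
  assumes max: "maximal_clique (S ` E)" and "RApp s t \<in> E"
  shows "E = apps {a. \<exists>b. RApp a b \<in> E} {b. \<exists>a. RApp a b \<in> E}" (is "E = apps ?E1 ?E2")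
proof -
  have cl: "coh (S x) (S y)" if "x \<in> E" "y \<in> E" for x y
    using max that unfolding maximal_clique_def clique_image by blast
  have "\<exists>a b. x = RApp a b" if "x \<in> E" for x
    using cl[OF \<open>RApp s t \<in> E\<close> that] by auto
  then have "S ` E \<subseteq> S ` apps ?E1 ?E2"
    unfolding apps_def by fast
  moreover have "coh (S a) (S a') \<and> coh (S b) (S b')"
    if "RApp a b \<in> E" "RApp a' b' \<in> E" for a a' b b'
    using cl[OF that] by simp
  then have "clique (S ` ?E1)" "clique (S ` ?E2)"
    unfolding clique_image by blast+
  ultimately have "S ` E = S ` apps ?E1 ?E2"
    using maximal_clique_eq_clique_superset[OF max] clique_apps by blast
  then show ?thesis
    by (simp add: inj_image_eq_iff inj_def)
qed

lemma maximal_clique_RBag_member: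
  assumes max: "maximal_clique (S ` E)" and "RBag A \<in> E"
  shows "E = bags_over (\<Union>B \<in> {B. RBag B \<in> E}. set_mset B)" (is "E = bags_over ?U")
proof -
  have cl: "coh (S x) (S y)" if "x \<in> E" "y \<in> E" for x y
    using max that unfolding maximal_clique_def clique_image by blast
  have "\<exists>B. x = RBag B" if "x \<in> E" for x
    using cl[OF \<open>RBag A \<in> E\<close> that] by auto
  then have "S ` E \<subseteq> S ` bags_over ?U"
    unfolding bags_over_def by fast
  moreover have "coh (V u) (V w)" if "RBag B \<in> E" "RBag B' \<in> E" "u \<in># B" "w \<in># B'"
    for B B' u w
    using cl[OF that(1,2)] that(3,4) by simp
  then have "clique (V ` ?U)"
    unfolding clique_image by blast
  ultimately have "S ` E = S ` bags_over ?U"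
    using maximal_clique_eq_clique_superset[OF max] clique_bags_over by blast
  then show ?thesis
    by (simp add: inj_image_eq_iff inj_def)
qed

lemma taylor_Var_eq: "taylor (Var x) = bags_over {RVar x}"
proof -
  have "A = replicate_mset (count A (RVar x)) (RVar x)" if "set_mset A \<subseteq> {RVar x}" for A
    using that by (intro multiset_eqI) (auto simp: count_eq_zero_iff)
  then show ?thesis
    unfolding bags_over_def by (auto split: if_splits)
qed

lemma taylor_Lam_eq: "taylor (Lam N) = bags_over (RLam ` taylor N)"
  unfolding bags_over_def by (auto simp: subset_iff image_iff)

lemma taylor_App_eq: "taylor (App P Q) = apps (taylor P) (taylor Q)"
  unfolding apps_def by simp

lemma maximal_clique_taylor: "maximal_clique (S ` taylor M)"
proof (induction M)
  case (Var x)
  show ?case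
    unfolding taylor_Var_eq by (rule maximal_clique_bags_overI[OF maximal_clique_RVar])
next
  case (Lam N)
  then show ?case
    unfolding taylor_Lam_eq by (simp add: maximal_clique_bags_overI maximal_clique_RLam_image_iff)
next
  case (App P Q)
  then show ?case
    unfolding taylor_App_eq by (rule maximal_clique_appsI)
qed

lemma ht_bags_over_le: "(\<forall>u\<in>U. ht_v u \<le> n) \<Longrightarrow> s \<in> bags_over U \<Longrightarrow> ht_s s \<le> Suc n"
  unfolding bags_over_def by (auto simp: subset_iff)

lemma ht_apps_le:
  "(\<forall>s\<in>E. ht_s s \<le> n) \<Longrightarrow> (\<forall>t\<in>F. ht_s t \<le> n) \<Longrightarrow> s \<in> apps E F \<Longrightarrow> ht_s s \<le> Suc n"
  unfolding apps_def by auto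

lemma taylor_bounded_height: "\<exists>n. \<forall>s\<in>taylor M. ht_s s \<le> n"
proof (induction M)
  case (Var x)
  show ?case
    unfolding taylor_Var_eq using ht_bags_over_le[of "{RVar x}" 0] by auto
next
  case (Lam N)
  then obtain n where "\<forall>s\<in>taylor N. ht_s s \<le> n" by blast
  then have "\<forall>u\<in>RLam ` taylor N. ht_v u \<le> Suc n" by auto
  then show ?case
    unfolding taylor_Lam_eq using ht_bags_over_le by blast
next
  case (App P Q)
  then obtain m n where "\<forall>s\<in>taylor P. ht_s s \<le> m" "\<forall>t\<in>taylor Q. ht_s t \<le> n" by blast
  then have "\<forall>s\<in>taylor P. ht_s s \<le> max m n" "\<forall>t\<in>taylor Q. ht_s t \<le> max m n" by auto
  then show ?case
    unfolding taylor_App_eq using ht_apps_le by blast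
qed

lemma maximal_clique_cases:
  assumes max: "maximal_clique (S ` E)"
  obtains (App) E1 E2 where "E = apps E1 E2" "maximal_clique (S ` E1)" "maximal_clique (S ` E2)"
  | (Var) x where "E = bags_over {RVar x}"
  | (Lam) F where "E = bags_over (RLam ` F)" "maximal_clique (S ` F)"
proof -
  obtain e where "e \<in> E"
    using max maximal_clique_nonempty by blast
  show thesis
  proof (cases e)
    case (RApp s t)
    then obtain E1 E2 where "E = apps E1 E2"
      using maximal_clique_RApp_member[OF max] \<open>e \<in> E\<close> by blast
    with max show thesis
      using App maximal_clique_appsD by blast
  next
    case (RBag A)
    then obtain U where E: "E = bags_over U"
      using maximal_clique_RBag_member[OF max] \<open>e \<in> E\<close> by blast
    with max have maxU: "maximal_clique (V ` U)"
      by (simp add: maximal_clique_bags_overD)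
    then obtain u where "u \<in> U" and clU: "clique (V ` U)"
      using maximal_clique_nonempty unfolding maximal_clique_def by blast
    show thesis
    proof (cases u)
      case (RVar x)
      then show thesis
        using Var clique_RVar_member[OF clU] \<open>u \<in> U\<close> E by blast
    next
      case (RLam t)
      then obtain F where "U = RLam ` F"
        using clique_RLam_member[OF clU] \<open>u \<in> U\<close> by blast
      with maxU show thesis
        using Lam E by (simp add: maximal_clique_RLam_image_iff)
    qed
  qed
qed

lemma maximal_clique_bounded_height_is_taylor:
  "maximal_clique (S ` E) \<Longrightarrow> \<forall>s\<in>E. ht_s s \<le> n \<Longrightarrow> \<exists>M. E = taylor M"
proof (induction n arbitrary: E rule: less_induct)
  case (less n)
  from less.prems(1) show ?case
  proof (cases rule: maximal_clique_cases)
    case (App E1 E2)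
    then obtain a0 b0 where "a0 \<in> E1" "b0 \<in> E2"
      using maximal_clique_nonempty by blast
    have "Suc (ht_s a) \<le> n" if "a \<in> E1" for a
      using less.prems(2) that \<open>b0 \<in> E2\<close> by (fastforce simp: App(1) apps_def)
    moreover have "Suc (ht_s b) \<le> n" if "b \<in> E2" for b
      using less.prems(2) that \<open>a0 \<in> E1\<close> by (fastforce simp: App(1) apps_def)
    moreover obtain m where "n = Suc m"
      using calculation(1)[OF \<open>a0 \<in> E1\<close>] Suc_le_D by blast
    ultimately have "\<forall>a\<in>E1. ht_s a \<le> m" "\<forall>b\<in>E2. ht_s b \<le> m"
      by auto
    then obtain P Q where "E1 = taylor P" "E2 = taylor Q"
      using less.IH[of m] App(2,3) \<open>n = Suc m\<close> by blast
    then have "E = taylor (App P Q)"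
      by (simp only: App(1) taylor_App_eq)
    then show ?thesis ..
  next
    case (Var x)
    then have "E = taylor (Var x)"
      by (simp only: taylor_Var_eq)
    then show ?thesis ..
  next
    case (Lam F)
    then obtain t0 where "t0 \<in> F"
      using maximal_clique_nonempty by blast
    have "Suc (Suc (ht_s t)) \<le> n" if "t \<in> F" for t
    proof -
      have "RBag {#RLam t#} \<in> E"
        using that by (simp add: Lam(1) bags_over_def)
      then show ?thesis using less.prems(2) by fastforce
    qed
    moreover obtain m where "n = Suc (Suc m)"
      using calculation[OF \<open>t0 \<in> F\<close>] by (metis Suc_le_D Suc_le_mono)
    ultimately have "\<forall>t\<in>F. ht_s t \<le> m"
      by auto
    then obtain N where "F = taylor N"
      using less.IH[of m] Lam(2) \<open>n = Suc (Suc m)\<close> by auto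
    then have "E = taylor (Lam N)"
      by (simp only: Lam(1) taylor_Lam_eq)
    then show ?thesis ..
  qed
qed

theorem proposition3p18:
  fixes E :: "rsimp set"
  shows "(maximal_clique (S ` E) \<and> finite_height (S ` E)) \<longleftrightarrow> (\<exists>M. E = taylor M)"
proof
  assume "maximal_clique (S ` E) \<and> finite_height (S ` E)"
  then obtain n where "maximal_clique (S ` E)" "\<forall>s\<in>E. ht_s s \<le> n"
    unfolding finite_height_def by auto
  then show "\<exists>M. E = taylor M"
    by (rule maximal_clique_bounded_height_is_taylor)
next
  assume "\<exists>M. E = taylor M"
  then obtain M where E: "E = taylor M" ..
  have "maximal_clique (S ` E)"
    unfolding E by (rule maximal_clique_taylor)
  moreover obtain n where "\<forall>s\<in>E. ht_s s \<le> n"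
    unfolding E using taylor_bounded_height by blast
  ultimately show "maximal_clique (S ` E) \<and> finite_height (S ` E)"
    unfolding finite_height_def using maximal_clique_nonempty by auto
qed

end
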